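(* For each fixed $x\in\mathcal X$, as $\mu\ge 0$ increases: (1) $p_{C^\mu(x)}(x)$ is non-decreasing; (2) $w(C^\mu(x))\,p_{C^\mu(x)}(x)$ is non-increasing; (3) $D^\mu(x)$ is non-increasing; (4) $w(C^\mu(x))\,p_{C^\mu(x)}(x)\,D^\mu(x)$ is non-increasing; (5) $(1-p_{C^\mu(x)}(x)-\alpha)D^\mu(x)$ is non-increasing.
   Context: Let $(X,Y)\sim P_{XY}$ on $\mathcal X\times\mathcal Y$, $\alpha\in(0,1)$. $\mathcal I$ is a finite collection of subsets of $\mathcal Y$ enumerated in a fixed lexicographic order, $w:\mathcal I\to(0,B)$ a bounded positive weight. For $C\in\mathcal I$ let $p_C(x)=\mathbb P(Y\in C\mid X=x)$, $\ell_{x,C}(\mu)=w(C)p_C(x)+\mu(p_C(x)-(1-\alpha))$ for $\mu\ge0$, $\mathcal U_x(\mu)=\max_{C\in\mathcal I}\ell_{x,C}(\mu)$. $C^\mu(x)$ is a maximizer of $\ell_{x,C}(\mu)$ over $C\in\mathcal I$, ties broken in favor of the largest $w(C)$ and then the smallest index; $D^\mu(x)=\mathbb 1\{\mathcal U_x(\mu)\ge 0\}$. *)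

theory Defs
  imports "HOL-Probability.Probability"
begin

text \<open>The finite collection \<I> is given as a list Is (its fixed enumeration; the index
of C is its position in the list).  For a fixed x, p C stands for p_C(x).\<close>

definition ell :: "('y set \<Rightarrow> real) \<Rightarrow> ('y set \<Rightarrow> real) \<Rightarrow> real \<Rightarrow> real \<Rightarrow> 'y set \<Rightarrow> real" where
  "ell w p alpha mu C = w C * p C + mu * (p C - (1 - alpha))"

definition Uval :: "'y set list \<Rightarrow> ('y set \<Rightarrow> real) \<Rightarrow> ('y set \<Rightarrow> real) \<Rightarrow> real \<Rightarrow> real \<Rightarrow> real" where
  "Uval Is w p alpha mu = Max (ell w p alpha mu ` set Is)"

definition Copt :: "'y set list \<Rightarrow> ('y set \<Rightarrow> real) \<Rightarrow> ('y set \<Rightarrow> real) \<Rightarrow> real \<Rightarrow> real \<Rightarrow> 'y set" where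
  "Copt Is w p alpha mu =
     (let U = Uval Is w p alpha mu;
          Ms = {C \<in> set Is. ell w p alpha mu C = U};
          W = Max (w ` Ms)
      in Is ! (LEAST i. i < length Is \<and> ell w p alpha mu (Is ! i) = U \<and> w (Is ! i) = W))"

definition Dval :: "'y set list \<Rightarrow> ('y set \<Rightarrow> real) \<Rightarrow> ('y set \<Rightarrow> real) \<Rightarrow> real \<Rightarrow> real \<Rightarrow> real" where
  "Dval Is w p alpha mu = (if Uval Is w p alpha mu \<ge> 0 then 1 else 0)"

text \<open>p_C(x) = P(Y \<in> C | X = x), given through a regular conditional distribution K of Y given X.\<close>
definition pC :: "('x \<Rightarrow> 'y measure) \<Rightarrow> 'x \<Rightarrow> 'y set \<Rightarrow> real" where
  "pC K x C = measure (K x) C"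

end

theory Submission
  imports Defs
begin

text \<open>Each C gives the affine function mu \<mapsto> w C p_C + mu (p_C - (1 - alpha)), and C^mu
maximizes these at mu.  Adding the optimality of C^mu1 at mu1 and of C^mu2 at mu2 gives
(mu2 - mu1)(p(C^mu2) - p(C^mu1)) \<ge> 0, i.e. (1); optimality of C^mu1 at mu1 \<ge> 0 together
with (1) gives (2).  If U(mu1) < 0 for some mu1 \<ge> 0, no line can have nonnegative slope
(since w C p_C \<ge> 0 it would be nonnegative at mu1), so all lines and hence U decrease
from mu1 on: this is (3).  Then (4) is a product of nonnegative antitone factors, and (5)
follows from (1) and (3) because D^mu2 = 0 forces p(C^mu1) < 1 - alpha.\<close>

lemma maximizer_slope_mono:
  fixes a b :: "'c \<Rightarrow> real"
  assumes "a c2 + s * b c2 \<le> a c1 + s * b c1"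
    and "a c1 + t * b c1 \<le> a c2 + t * b c2"
    and "s < t"
  shows "b c1 \<le> b c2"
proof -
  have "0 \<le> (t - s) * (b c2 - b c1)"
    using assms(1,2) by (simp add: algebra_simps)
  with \<open>s < t\<close> show ?thesis
    by (simp add: zero_le_mult_iff)
qed

lemma maximizer_intercept_antimono:
  fixes a b :: "'c \<Rightarrow> real"
  assumes "a c2 + s * b c2 \<le> a c1 + s * b c1"
    and "b c1 \<le> b c2" and "0 \<le> s"
  shows "a c2 \<le> a c1"
proof -
  have "0 \<le> s * (b c2 - b c1)"
    using assms(2,3) by simp
  with assms(1) show ?thesis
    by (simp add: algebra_simps)
qed

lemma ell_le_Uval:
  assumes "C \<in> set Is"
  shows "ell w p alpha mu C \<le> Uval Is w p alpha mu"
  unfolding Uval_def using assms by (intro Max_ge) auto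

lemma Copt_mem_and_attains_Uval:
  assumes "Is \<noteq> []"
  shows "Copt Is w p alpha mu \<in> set Is"
    and "ell w p alpha mu (Copt Is w p alpha mu) = Uval Is w p alpha mu"
proof -
  define U where "U = Uval Is w p alpha mu"
  define Ms where "Ms = {C \<in> set Is. ell w p alpha mu C = U}"
  define W where "W = Max (w ` Ms)"
  let ?P = "\<lambda>i. i < length Is \<and> ell w p alpha mu (Is ! i) = U \<and> w (Is ! i) = W"
  have "U \<in> ell w p alpha mu ` set Is"
    unfolding U_def Uval_def using assms by (intro Max_in) auto
  then have "Ms \<noteq> {}" and "finite Ms"
    unfolding Ms_def by auto
  then have "W \<in> w ` Ms"
    unfolding W_def by (intro Max_in) auto
  then obtain i where "?P i"
    unfolding Ms_def by (auto simp: in_set_conv_nth)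
  then have "?P (LEAST i. ?P i)"
    by (rule LeastI)
  moreover have "Copt Is w p alpha mu = Is ! (LEAST i. ?P i)"
    unfolding Copt_def U_def Ms_def W_def Let_def by simp
  ultimately show "Copt Is w p alpha mu \<in> set Is"
    and "ell w p alpha mu (Copt Is w p alpha mu) = Uval Is w p alpha mu"
    unfolding U_def by auto
qed

lemma p_Copt_mono:
  assumes "Is \<noteq> []" and "mu1 \<le> mu2"
  shows "p (Copt Is w p alpha mu1) \<le> p (Copt Is w p alpha mu2)"
proof (cases "mu1 = mu2")
  case False
  let ?C1 = "Copt Is w p alpha mu1" and ?C2 = "Copt Is w p alpha mu2"
  have "ell w p alpha mu1 ?C2 \<le> ell w p alpha mu1 ?C1"
    "ell w p alpha mu2 ?C1 \<le> ell w p alpha mu2 ?C2"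
    using Copt_mem_and_attains_Uval[OF assms(1)] ell_le_Uval by metis+
  then have "p ?C1 - (1 - alpha) \<le> p ?C2 - (1 - alpha)"
    using False assms(2) unfolding ell_def
    by (intro maximizer_slope_mono[where a = "\<lambda>C. w C * p C"]) auto
  then show ?thesis
    by simp
qed simp

lemma weighted_p_Copt_antimono:
  assumes "Is \<noteq> []" and "0 \<le> mu1" and "mu1 \<le> mu2"
  shows "w (Copt Is w p alpha mu2) * p (Copt Is w p alpha mu2)
    \<le> w (Copt Is w p alpha mu1) * p (Copt Is w p alpha mu1)"
proof -
  let ?C1 = "Copt Is w p alpha mu1" and ?C2 = "Copt Is w p alpha mu2"
  have "ell w p alpha mu1 ?C2 \<le> ell w p alpha mu1 ?C1"
    using Copt_mem_and_attains_Uval[OF assms(1)] ell_le_Uval by metis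
  moreover have "p ?C1 - (1 - alpha) \<le> p ?C2 - (1 - alpha)"
    using p_Copt_mono[OF assms(1,3)] by simp
  ultimately show ?thesis
    using assms(2) unfolding ell_def
    by (rule maximizer_intercept_antimono[where b = "\<lambda>C. p C - (1 - alpha)"])
qed

lemma Uval_neg_imp_below_threshold:
  assumes "\<And>C. C \<in> set Is \<Longrightarrow> 0 \<le> w C * p C"
    and "0 \<le> mu" and "Uval Is w p alpha mu < 0" and "C \<in> set Is"
  shows "p C < 1 - alpha"
proof (rule ccontr)
  assume "\<not> p C < 1 - alpha"
  then have "0 \<le> ell w p alpha mu C"
    using assms(1,2,4) unfolding ell_def by simp
  also have "\<dots> \<le> Uval Is w p alpha mu"
    using assms(4) by (rule ell_le_Uval)
  finally show False
    using assms(3) by simp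
qed

lemma Dval_antimono:
  assumes "Is \<noteq> []" and "\<And>C. C \<in> set Is \<Longrightarrow> 0 \<le> w C * p C"
    and "0 \<le> mu1" and "mu1 \<le> mu2"
  shows "Dval Is w p alpha mu2 \<le> Dval Is w p alpha mu1"
proof (cases "Uval Is w p alpha mu1 < 0")
  case True
  let ?C2 = "Copt Is w p alpha mu2"
  have "?C2 \<in> set Is"
    using assms(1) by (rule Copt_mem_and_attains_Uval)
  then have "p ?C2 < 1 - alpha"
    using Uval_neg_imp_below_threshold[OF assms(2,3) True] by simp
  then have "ell w p alpha mu2 ?C2 \<le> ell w p alpha mu1 ?C2"
    using assms(4) unfolding ell_def by (simp add: mult_right_mono_neg)
  also have "\<dots> \<le> Uval Is w p alpha mu1"
    using \<open>?C2 \<in> set Is\<close> by (rule ell_le_Uval)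
  finally have "Uval Is w p alpha mu2 < 0"
    using True Copt_mem_and_attains_Uval(2)[OF assms(1)] by simp
  then show ?thesis
    unfolding Dval_def by simp
qed (simp add: Dval_def)

theorem proposition2:
  fixes K :: "'x \<Rightarrow> 'y measure" and Is :: "'y set list" and w :: "'y set \<Rightarrow> real"
    and alpha B :: real and x :: 'x
  assumes "\<And>x. prob_space (K x)"
    and "\<And>x C. C \<in> set Is \<Longrightarrow> C \<in> sets (K x)"
    and "0 < alpha" and "alpha < 1"
    and "Is \<noteq> []" and "distinct Is"
    and "\<And>C. C \<in> set Is \<Longrightarrow> 0 < w C \<and> w C < B"
  shows "\<forall>mu1 mu2. 0 \<le> mu1 \<and> mu1 \<le> mu2 \<longrightarrow>
    (let p = pC K x;
         C1 = Copt Is w p alpha mu1; C2 = Copt Is w p alpha mu2;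
         D1 = Dval Is w p alpha mu1; D2 = Dval Is w p alpha mu2
     in p C1 \<le> p C2
      \<and> w C2 * p C2 \<le> w C1 * p C1
      \<and> D2 \<le> D1
      \<and> w C2 * p C2 * D2 \<le> w C1 * p C1 * D1
      \<and> (1 - p C2 - alpha) * D2 \<le> (1 - p C1 - alpha) * D1)"
proof (intro allI impI)
  fix mu1 mu2 :: real
  assume mu: "0 \<le> mu1 \<and> mu1 \<le> mu2"
  define p where "p = pC K x"
  let ?C1 = "Copt Is w p alpha mu1" and ?C2 = "Copt Is w p alpha mu2"
  have wp_nonneg: "0 \<le> w C * p C" if "C \<in> set Is" for C
    using assms(7)[OF that] unfolding p_def pC_def by simp
  have mem: "?C1 \<in> set Is" "?C2 \<in> set Is"
    using Copt_mem_and_attains_Uval(1)[OF assms(5)] by auto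
  have p_mono: "p ?C1 \<le> p ?C2"
    using p_Copt_mono[OF assms(5)] mu by blast
  have wp_antimono: "w ?C2 * p ?C2 \<le> w ?C1 * p ?C1"
    using weighted_p_Copt_antimono[OF assms(5)] mu by blast
  have D_antimono: "Dval Is w p alpha mu2 \<le> Dval Is w p alpha mu1"
    using mu by (intro Dval_antimono[OF assms(5)] wp_nonneg) auto
  have "p ?C1 < 1 - alpha" if "Dval Is w p alpha mu2 = 0"
  proof (rule Uval_neg_imp_below_threshold[OF wp_nonneg])
    show "Uval Is w p alpha mu2 < 0"
      using that unfolding Dval_def by (simp split: if_splits)
  qed (use mu mem in auto)
  then show "let p = pC K x;
         C1 = Copt Is w p alpha mu1; C2 = Copt Is w p alpha mu2;
         D1 = Dval Is w p alpha mu1; D2 = Dval Is w p alpha mu2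
     in p C1 \<le> p C2
      \<and> w C2 * p C2 \<le> w C1 * p C1
      \<and> D2 \<le> D1
      \<and> w C2 * p C2 * D2 \<le> w C1 * p C1 * D1
      \<and> (1 - p C2 - alpha) * D2 \<le> (1 - p C1 - alpha) * D1"
    using p_mono wp_antimono D_antimono wp_nonneg[OF mem(2)]
    unfolding Let_def p_def[symmetric] Dval_def by (auto split: if_splits)
qed

end
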